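(* Let $p>q>0$ be relatively prime integers with Hirzebruch–Jung continued fraction expansion $p/q=[a_1,\ldots,a_n]$, $a_i\geq 2$, and let \[ S = \sum_{i:\,a_i>3} (a_i-3). \] If $S > 2p/9$, then at most two of the $a_i$ are greater than $3$.
   Context: The Hirzebruch–Jung continued fraction $[a_1,\ldots,a_n]$ denotes $a_1 - 1/(a_2 - 1/(\cdots - 1/a_n))$; it is computed recursively by $p_1/q_1=p/q$, $p_i/q_i = a_i - q_{i+1}/p_{i+1}$ with $p_{i+1}=q_i$ and $0<q_{i+1}<p_{i+1}$. *)

theory Defs
  imports Main
begin

text \<open>Hirzebruch--Jung continued fraction expansion of p/q (p > q > 0 coprime):
  p/q = a_1 - 1/(a_2 - ... - 1/a_n).  Computed recursively: a_1 = ceiling(p/q),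
  and p/q = a_1 - q'/p' with p' = q, q' = a_1*q - p, 0 <= q' < q; stop when q' = 0.\<close>

function hj_cf :: "int \<Rightarrow> int \<Rightarrow> int list" where
  "hj_cf p q =
     (if q \<le> 0 then []
      else (let a = (p + q - 1) div q; r = a * q - p in
            if r \<le> 0 then [a] else a # hj_cf q r))"
  by pat_completeness auto
termination
proof (relation "measure (\<lambda>(p, q). nat q)")
  fix p q a r :: int
  assume q: "\<not> q \<le> 0" and a: "a = (p + q - 1) div q" and r: "r = a * q - p"
  have "q * ((p + q - 1) div q) = (p + q - 1) - (p + q - 1) mod q"
    by (simp add: minus_mod_eq_mult_div)
  moreover have "(p + q - 1) mod q \<ge> 0" using q by simp
  ultimately have "q * ((p + q - 1) div q) \<le> p + q - 1" by linarith
  hence "a * q - p < q" using a by (simp add: mult.commute)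
  thus "((q, r), p, q) \<in> measure (\<lambda>(p, q). nat q)" using q r by simp
qed simp

end

theory Submission
  imports Defs
begin

text \<open>Writing \<open>p/q = a - r/q\<close>, one has \<open>p = a q - r > (a - 1) q\<close>, so the numerators of the
  successive tails satisfy \<open>p\<^sub>i \<ge> (a\<^sub>i - 1) p\<^sub>i\<^sub>+\<^sub>1\<close> and the product of the \<open>a\<^sub>i - 1\<close> over
  any subset of the entries is at most \<open>p\<close>.  On the other hand, for three or more integers
  \<open>a\<^sub>i > 3\<close> one has \<open>9 \<Sum>(a\<^sub>i - 3) \<le> 2 \<Prod>(a\<^sub>i - 1)\<close>, since the product grows much faster than
  the sum.  Together these contradict \<open>9 S > 2 p\<close>.\<close>

declare hj_cf.simps [simp del] \<comment> \<open>otherwise \<open>auto\<close> unfolds the recursion indefinitely\<close>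

lemma ceiling_div_mult_bounds:
  fixes p q :: int
  assumes "0 < q"
  shows "p \<le> (p + q - 1) div q * q" and "(p + q - 1) div q * q < p + q"
proof -
  have "(p + q - 1) div q * q = p + q - 1 - (p + q - 1) mod q"
    by (simp add: minus_mod_eq_div_mult)
  moreover have "0 \<le> (p + q - 1) mod q" "(p + q - 1) mod q < q"
    using assms by simp_all
  ultimately show "p \<le> (p + q - 1) div q * q" and "(p + q - 1) div q * q < p + q"
    by linarith+
qed

lemma hj_cf_filter_prod_le:
  fixes p q :: int
  assumes "0 < q" and "q < p"
  shows "prod_list (map (\<lambda>a. a - 1) (filter P (hj_cf p q))) \<le> p"
  using assms
proof (induction p q rule: hj_cf.induct)
  case (1 p q)
  define a where "a = (p + q - 1) div q"
  define r where "r = a * q - p"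
  have "p \<le> a * q" and "a * q < p + q"
    using ceiling_div_mult_bounds[OF "1.prems"(1)] unfolding a_def by simp_all
  then have r_bounds: "0 \<le> r" "r < q"
    unfolding r_def by simp_all
  have "0 < a * q"
    using \<open>p \<le> a * q\<close> "1.prems" by linarith
  from zero_less_mult_pos2[OF this "1.prems"(1)] have "1 \<le> a"
    by simp
  show ?case
  proof (cases "r \<le> 0")
    case True
    then have expansion: "hj_cf p q = [a]"
      using "1.prems" by (subst hj_cf.simps) (simp add: a_def r_def Let_def)
    have "p = a * q"
      using True r_bounds unfolding r_def by simp
    moreover have "a \<le> a * q"
      using \<open>1 \<le> a\<close> "1.prems"(1) by simp
    ultimately have "a - 1 \<le> p"
      by simp
    with "1.prems" show ?thesis
      unfolding expansion by simp
  next
    case False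
    then have expansion: "hj_cf p q = a # hj_cf q r"
      using "1.prems" by (subst hj_cf.simps) (simp add: a_def r_def Let_def)
    let ?tail = "prod_list (map (\<lambda>a. a - 1) (filter P (hj_cf q r)))"
    have "?tail \<le> q"
      using "1.IH"[OF _ a_def r_def] "1.prems" False r_bounds by simp
    moreover have "(a - 1) * q \<le> p"
      using r_bounds unfolding r_def by (simp add: algebra_simps)
    ultimately have "(a - 1) * ?tail \<le> p" and "?tail \<le> p"
      using \<open>1 \<le> a\<close> "1.prems"(2) mult_left_mono[of ?tail q "a - 1"] by simp_all
    then show ?thesis
      unfolding expansion by simp
  qed
qed

lemma pow_length_le_prod_list:
  fixes f :: "'a \<Rightarrow> 'b::linordered_semidom"
  assumes "\<forall>x\<in>set xs. c \<le> f x" and "0 \<le> c"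
  shows "c ^ length xs \<le> prod_list (map f xs)"
  using assms by (induction xs) (auto intro: mult_mono order_trans)

lemma three_large_sum_le_prod:
  fixes a b c :: int
  assumes "3 < a" "3 < b" "3 < c"
  shows "9 * ((a - 3) + (b - 3) + (c - 3)) \<le> 2 * ((a - 1) * (b - 1) * (c - 1))"
proof -
  have "a - 3 \<le> (a - 3) * (b - 3)" "b - 3 \<le> (b - 3) * (c - 3)" "c - 3 \<le> (c - 3) * (a - 3)"
    "0 \<le> (a - 3) * (b - 3) * (c - 3)"
    using assms by simp_all
  with assms show ?thesis
    by (simp add: algebra_simps)
qed

lemma large_entries_sum_le_prod:
  fixes xs :: "int list"
  assumes "\<forall>a\<in>set xs. 3 < a" and "3 \<le> length xs"
  shows "9 * sum_list (map (\<lambda>a. a - 3) xs) \<le> 2 * prod_list (map (\<lambda>a. a - 1) xs)"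
  using assms
proof (induction xs)
  case Nil
  then show ?case by simp
next
  case (Cons a xs)
  show ?case
  proof (cases "3 \<le> length xs")
    case True
    let ?P = "prod_list (map (\<lambda>a. a - 1) xs)"
    have "3 ^ length xs \<le> ?P"
      using Cons.prems(1) by (intro pow_length_le_prod_list) auto
    moreover have "(3::int) ^ 3 \<le> 3 ^ length xs"
      using True by (intro power_increasing) simp_all
    ultimately have "5 \<le> ?P" by simp
    then have "9 * (a - 3) \<le> 2 * (a - 2) * ?P"
      using Cons.prems(1) mult_left_mono[of 5 ?P "2 * (a - 2)"] by simp
    then show ?thesis
      using Cons True by (simp add: algebra_simps)
  next
    case False
    then have "length xs = 2"
      using Cons.prems(2) by simp
    then obtain b c where "xs = [b, c]"
      by (auto simp: length_Suc_conv numeral_2_eq_2)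
    then show ?thesis
      using Cons.prems(1) three_large_sum_le_prod[of a b c] by (simp add: algebra_simps)
  qed
qed

theorem mainTheorem8:
  fixes p q :: int
  assumes "p > q" and "q > 0" and "coprime p q"
    and "(\<Sum>a\<leftarrow>filter (\<lambda>a. a > 3) (hj_cf p q). a - 3) * 9 > 2 * p"
  shows "length (filter (\<lambda>a. a > 3) (hj_cf p q)) \<le> 2"
proof (rule ccontr)
  let ?large = "filter (\<lambda>a. a > 3) (hj_cf p q)"
  assume "\<not> length ?large \<le> 2"
  then have "9 * sum_list (map (\<lambda>a. a - 3) ?large) \<le> 2 * prod_list (map (\<lambda>a. a - 1) ?large)"
    by (intro large_entries_sum_le_prod) auto
  moreover have "prod_list (map (\<lambda>a. a - 1) ?large) \<le> p"
    using assms(2,1) by (rule hj_cf_filter_prod_le)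
  ultimately show False
    using assms(4) by simp
qed

end
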